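(* Let $\alpha>0$, $\eta=\alpha/(L+\alpha)$, and consider AggGCG (primal) from $y_0\in\mathrm{dom}\, h$, $s_0\in\mathbb{R}^n$: for $k\ge0$, $x_{k+1}=\mathrm{argmin}_x\{\langle s_k,x\rangle+h^\alpha(x)\}$, $y_{k+1}=(1-\eta)y_k+\eta x_{k+1}$, $s_{k+1}=(1-\eta)s_k+\eta\nabla f(y_k)$. Then for all $k\ge0$: (a) $f(y_{k+1})\le(1-\eta)f(y_k)-\eta f^*(\nabla f(y_k))+\eta\langle\nabla f(y_k),x_{k+1}\rangle+\frac{L\eta^2}{2}\|x_{k+1}-y_k\|^2$; (b) $(h^\alpha)^*(-s_{k+1})\le(1-\eta)(h^\alpha)^*(-s_k)-\eta h^\alpha(x_{k+1})-\eta\langle x_{k+1},\nabla f(y_k)\rangle+\frac{\eta^2}{2\alpha}\|\nabla f(y_k)-s_k\|_*^2$; (c) $h^\alpha(y_{k+1})\le\eta h^\alpha(x_{k+1})+(1-\eta)h^\alpha(y_k)-\frac{\alpha\eta(1-\eta)}{2}\|x_{k+1}-y_k\|^2$; (d) $f^*(s_{k+1})\le\eta f^*(\nabla f(y_k))+(1-\eta)f^*(s_k)-\frac{\eta(1-\eta)}{2L}\|\nabla f(y_k)-s_k\|_*^2$.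
   Context: Let $\|\cdot\|$ be a norm on $\mathbb{R}^n$ with dual norm $\|\cdot\|_*$. Let $f:\mathbb{R}^n\to\mathbb{R}$ be convex, differentiable and $L$-smooth ($L>0$) with respect to $\|\cdot\|$, $h:\mathbb{R}^n\to(-\infty,\infty]$ closed proper convex with bounded domain, and $w:\mathbb{R}^n\to[0,+\infty]$ closed, $1$-strongly convex with respect to $\|\cdot\|$ on $\mathrm{dom}\, h$, with $\max_{\mathrm{dom}\, h}w<\infty$. Let $h^\alpha=h+\alpha w$; $^*$ denotes convex conjugate. *)

theory Defs
  imports "HOL-Analysis.Analysis" "HOL-Library.Extended_Real"
begin

definition is_norm :: "('a::real_vector \<Rightarrow> real) \<Rightarrow> bool" where
  "is_norm N \<longleftrightarrow> (\<forall>x. N x = 0 \<longleftrightarrow> x = 0) \<and> (\<forall>c x. N (c *\<^sub>R x) = \<bar>c\<bar> * N x)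
     \<and> (\<forall>x y. N (x + y) \<le> N x + N y)"

definition dual_norm :: "('a::real_inner \<Rightarrow> real) \<Rightarrow> 'a \<Rightarrow> real" where
  "dual_norm N s = Sup {s \<bullet> x | x. N x \<le> 1}"

definition fconj :: "('a::real_inner \<Rightarrow> ereal) \<Rightarrow> 'a \<Rightarrow> ereal" where
  "fconj g s = (SUP x. ereal (s \<bullet> x) - g x)"

definition edom :: "('a \<Rightarrow> ereal) \<Rightarrow> 'a set" where
  "edom g = {x. g x < \<infinity>}"

definition proper_fun :: "('a \<Rightarrow> ereal) \<Rightarrow> bool" where
  "proper_fun g \<longleftrightarrow> (\<forall>x. g x \<noteq> -\<infinity>) \<and> (\<exists>x. g x < \<infinity>)"

definition closed_fun :: "('a::topological_space \<Rightarrow> ereal) \<Rightarrow> bool" where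
  "closed_fun g \<longleftrightarrow> closed {(x, t::real). g x \<le> ereal t}"

definition econvex :: "('a::real_vector \<Rightarrow> ereal) \<Rightarrow> bool" where
  "econvex g \<longleftrightarrow> (\<forall>x y t. 0 < t \<and> t < 1 \<longrightarrow>
      g (t *\<^sub>R x + (1 - t) *\<^sub>R y) \<le> ereal t * g x + ereal (1 - t) * g y)"

definition strongly_convex_on :: "real \<Rightarrow> ('a::real_vector \<Rightarrow> real) \<Rightarrow> 'a set \<Rightarrow> ('a \<Rightarrow> ereal) \<Rightarrow> bool" where
  "strongly_convex_on \<mu> N S g \<longleftrightarrow> (\<forall>x\<in>S. \<forall>y\<in>S. \<forall>t. 0 < t \<and> t < 1 \<longrightarrow>
      g (t *\<^sub>R x + (1 - t) *\<^sub>R y) \<le> ereal t * g x + ereal (1 - t) * g y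
        - ereal (\<mu> / 2 * t * (1 - t) * (N (x - y))\<^sup>2))"

end

theory Submission
  imports Defs
begin

(* Inequality (a) is the descent lemma for the L-smooth function f along
   y_(k+1) - y_k = eta (x_(k+1) - y_k), rewritten with Fenchel's equality
   f*(grad f y) = <grad f y, y> - f y; inequality (c) is the alpha-strong convexity of
   h + alpha w. Inequalities (b) and (d) are their duals. The conjugate of the
   alpha-strongly convex h + alpha w is (1/alpha)-smooth: its value at a perturbed slope
   is controlled through the quadratic growth of <s_k, .> + h + alpha w around its
   minimiser x_(k+1). The conjugate of the L-smooth f is (1/L)-strongly convex: testing
   the supremum defining f*(a) at z + v, with v a scaled direction attaining the dual norm
   of a - grad f z, gives f*(a) >= <a, z> - f z + |a - grad f z|_*^2 / (2 L) for every z.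
   The dual norm is a maximum because the unit ball of a norm on R^n is compact. *)

context
  fixes N :: "'a::real_vector \<Rightarrow> real"
  assumes N: "is_norm N"
begin

lemma is_norm_eq_zero_iff: "N x = 0 \<longleftrightarrow> x = 0"
  using N by (simp add: is_norm_def)

lemma is_norm_zero: "N 0 = 0"
  by (simp add: is_norm_eq_zero_iff)

lemma is_norm_scaleR: "N (c *\<^sub>R x) = \<bar>c\<bar> * N x"
  using N by (simp add: is_norm_def)

lemma is_norm_triangle: "N (x + y) \<le> N x + N y"
  using N by (simp add: is_norm_def)

lemma is_norm_minus: "N (- x) = N x"
  using is_norm_scaleR[of "-1" x] by simp

lemma is_norm_commute: "N (x - y) = N (y - x)"
  using is_norm_minus[of "x - y"] by simp

lemma is_norm_nonneg: "0 \<le> N x"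
  using is_norm_triangle[of x "- x"] is_norm_minus[of x] is_norm_zero by simp

lemma is_norm_pos: "x \<noteq> 0 \<Longrightarrow> 0 < N x"
  using is_norm_nonneg[of x] is_norm_eq_zero_iff[of x] by linarith

lemma convex_on_is_norm: "convex_on UNIV N"
proof (rule convex_onI)
  fix t :: real and x y assume t: "0 < t" "t < 1"
  have "N ((1 - t) *\<^sub>R x + t *\<^sub>R y) \<le> N ((1 - t) *\<^sub>R x) + N (t *\<^sub>R y)"
    by (rule is_norm_triangle)
  also have "\<dots> = (1 - t) * N x + t * N y"
    using t by (simp add: is_norm_scaleR)
  finally show "N ((1 - t) *\<^sub>R x + t *\<^sub>R y) \<le> (1 - t) * N x + t * N y" .
qed simp

end

context
  fixes N :: "'a::euclidean_space \<Rightarrow> real"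
  assumes N: "is_norm N"
begin

lemma continuous_on_is_norm: "continuous_on UNIV N"
  by (rule convex_on_continuous) (auto intro: convex_on_is_norm[OF N])

lemma is_norm_ge_norm: "\<exists>m>0. \<forall>x. m * norm x \<le> N x"
proof -
  obtain v where v: "v \<in> sphere 0 1" and v_min: "\<forall>u\<in>sphere 0 1. N v \<le> N u"
    using continuous_attains_inf[of "sphere (0::'a) 1" N] continuous_on_is_norm
    by (meson compact_sphere continuous_on_subset sphere_eq_empty subset_UNIV zero_le_one not_less)
  have "N v * norm x \<le> N x" for x
  proof (cases "x = 0")
    case False
    then have "N v \<le> N ((1 / norm x) *\<^sub>R x)"
      using v_min by simp
    with False show ?thesis
      by (simp add: is_norm_scaleR[OF N] field_simps)
  qed (simp add: is_norm_zero[OF N])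
  moreover have "0 < N v"
    using v by (auto intro: is_norm_pos[OF N])
  ultimately show ?thesis by blast
qed

lemma compact_is_norm_unit_ball: "compact {x. N x \<le> 1}"
proof -
  obtain m where m: "0 < m" "\<And>x. m * norm x \<le> N x"
    using is_norm_ge_norm by blast
  have "norm x \<le> 1 / m" if "N x \<le> 1" for x
    using m(2)[of x] that m(1) by (simp add: field_simps)
  then have "bounded {x. N x \<le> 1}"
    by (auto simp: bounded_iff)
  moreover have "closed {x. N x \<le> 1}"
    using continuous_on_is_norm by (auto intro: closed_Collect_le continuous_on_subset)
  ultimately show ?thesis
    by (simp add: compact_eq_bounded_closed)
qed

lemma dual_norm_attained: "\<exists>v. N v \<le> 1 \<and> a \<bullet> v = dual_norm N a"
proof -
  have "{x. N x \<le> 1} \<noteq> {}"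
    using is_norm_zero[OF N] by (metis empty_Collect_eq zero_le_one)
  then obtain v where v: "N v \<le> 1" and v_max: "\<And>u. N u \<le> 1 \<Longrightarrow> a \<bullet> u \<le> a \<bullet> v"
    using continuous_attains_sup[OF compact_is_norm_unit_ball _
        continuous_on_inner[OF continuous_on_const continuous_on_id], of a]
    by auto
  have "dual_norm N a = a \<bullet> v"
    unfolding dual_norm_def by (rule cSup_eq_maximum) (use v v_max in auto)
  with v show ?thesis by auto
qed

lemma inner_le_dual_norm_unit:
  assumes "N x \<le> 1"
  shows "a \<bullet> x \<le> dual_norm N a"
proof -
  have "{a \<bullet> x |x. N x \<le> 1} = (\<bullet>) a ` {x. N x \<le> 1}"
    by auto
  then have "bounded {a \<bullet> x |x. N x \<le> 1}"
    using compact_continuous_image[OF continuous_on_inner[OF continuous_on_const continuous_on_id]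
        compact_is_norm_unit_ball]
    by (simp add: compact_imp_bounded)
  then show ?thesis
    unfolding dual_norm_def using assms by (auto intro: cSup_upper bounded_imp_bdd_above)
qed

lemma inner_le_dual_norm: "a \<bullet> x \<le> dual_norm N a * N x"
proof (cases "x = 0")
  case False
  then have "N ((1 / N x) *\<^sub>R x) \<le> 1"
    by (simp add: is_norm_scaleR[OF N] is_norm_pos[OF N] less_imp_neq[symmetric])
  then have "a \<bullet> ((1 / N x) *\<^sub>R x) \<le> dual_norm N a"
    by (rule inner_le_dual_norm_unit)
  with is_norm_pos[OF N False] show ?thesis
    by (simp add: field_simps)
qed (simp add: is_norm_zero[OF N])

lemma dual_norm_nonneg: "0 \<le> dual_norm N a"
  using inner_le_dual_norm_unit[of 0 a] by (simp add: is_norm_zero[OF N])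

lemma dual_norm_minus: "dual_norm N (- a) = dual_norm N a"
proof -
  have le: "dual_norm N (- b) \<le> dual_norm N b" for b
  proof -
    obtain v where "N v \<le> 1" "- b \<bullet> v = dual_norm N (- b)"
      using dual_norm_attained by blast
    then show ?thesis
      using inner_le_dual_norm_unit[of "- v" b] by (simp add: is_norm_minus[OF N])
  qed
  show ?thesis
    using le[of a] le[of "- a"] by simp
qed

lemma dual_norm_triangle: "dual_norm N (a + b) \<le> dual_norm N a + dual_norm N b"
proof -
  obtain v where "N v \<le> 1" "(a + b) \<bullet> v = dual_norm N (a + b)"
    using dual_norm_attained by blast
  then show ?thesis
    using inner_le_dual_norm_unit[of v a] inner_le_dual_norm_unit[of v b]
    by (simp add: inner_add_left)
qed

lemma dual_norm_scaleR: "dual_norm N (c *\<^sub>R a) = \<bar>c\<bar> * dual_norm N a"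
proof -
  have nonneg: "dual_norm N (c *\<^sub>R a) = c * dual_norm N a" if "0 \<le> c" for c
  proof (rule antisym)
    obtain v where "N v \<le> 1" "(c *\<^sub>R a) \<bullet> v = dual_norm N (c *\<^sub>R a)"
      using dual_norm_attained by blast
    then show "dual_norm N (c *\<^sub>R a) \<le> c * dual_norm N a"
      using inner_le_dual_norm_unit[of v a] \<open>0 \<le> c\<close>
      by (metis inner_scaleR_left mult_left_mono)
  next
    obtain v where "N v \<le> 1" "a \<bullet> v = dual_norm N a"
      using dual_norm_attained by blast
    then show "c * dual_norm N a \<le> dual_norm N (c *\<^sub>R a)"
      using inner_le_dual_norm_unit[of v "c *\<^sub>R a"] by simp
  qed
  show ?thesis
  proof (cases "0 \<le> c")
    case False
    then have "c *\<^sub>R a = - (\<bar>c\<bar> *\<^sub>R a)"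
      by simp
    then show ?thesis
      using nonneg[of "\<bar>c\<bar>"] by (simp add: dual_norm_minus)
  qed (simp add: nonneg)
qed

end

lemma has_real_derivative_along_line:
  fixes f :: "'a::real_inner \<Rightarrow> real"
  assumes f_grad: "\<And>z. (f has_derivative (\<lambda>v. df z \<bullet> v)) (at z)"
  shows "((\<lambda>t. f (y + t *\<^sub>R d)) has_real_derivative (df (y + t *\<^sub>R d) \<bullet> d)) (at t within S)"
proof -
  have "((\<lambda>t. y + t *\<^sub>R d) has_derivative (\<lambda>u. u *\<^sub>R d)) (at t within S)"
    by (auto intro!: derivative_eq_intros)
  from has_derivative_in_compose[OF this has_derivative_subset[OF f_grad subset_UNIV]]
  show ?thesis
    by (simp add: o_def has_field_derivative_def mult.commute[of _ "df (y + t *\<^sub>R d) \<bullet> d"])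
qed

lemma convex_gradient_inequality:
  fixes f :: "'a::real_inner \<Rightarrow> real"
  assumes f_convex: "convex_on UNIV f"
    and f_grad: "\<And>z. (f has_derivative (\<lambda>v. df z \<bullet> v)) (at z)"
  shows "f y + df y \<bullet> (z - y) \<le> f z"
proof -
  define \<phi> where "\<phi> t = f (y + t *\<^sub>R (z - y))" for t
  have "convex_on UNIV \<phi>"
  proof (rule convex_onI)
    fix t a b :: real assume "0 < t" "t < 1"
    then show "\<phi> ((1 - t) *\<^sub>R a + t *\<^sub>R b) \<le> (1 - t) * \<phi> a + t * \<phi> b"
      using convex_onD[OF f_convex, of t "y + a *\<^sub>R (z - y)" "y + b *\<^sub>R (z - y)"]
      by (simp add: \<phi>_def algebra_simps)
  qed simp
  then have "df y \<bullet> (z - y) * (1 - 0) \<le> \<phi> 1 - \<phi> 0"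
    by (rule convex_on_imp_above_tangent)
      (use has_real_derivative_along_line[OF f_grad, of y "z - y" 0 UNIV] in \<open>auto simp: \<phi>_def[abs_def]\<close>)
  then show ?thesis
    by (simp add: \<phi>_def)
qed

lemma fenchel_young: "ereal (s \<bullet> z) - g z \<le> fconj g s"
  unfolding fconj_def by (rule SUP_upper) simp

lemma fconj_ereal_neq_minf: "fconj (\<lambda>z. ereal (f z)) s \<noteq> -\<infinity>"
  using fenchel_young[of s 0 "\<lambda>z. ereal (f z)"] by auto

lemma fconj_gradient:
  fixes f :: "'a::real_inner \<Rightarrow> real"
  assumes f_convex: "convex_on UNIV f"
    and f_grad: "\<And>z. (f has_derivative (\<lambda>v. df z \<bullet> v)) (at z)"
  shows "fconj (\<lambda>z. ereal (f z)) (df y) = ereal (df y \<bullet> y - f y)"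
proof (rule antisym)
  show "fconj (\<lambda>z. ereal (f z)) (df y) \<le> ereal (df y \<bullet> y - f y)"
    unfolding fconj_def
    using convex_gradient_inequality[OF f_convex f_grad, of y]
    by (auto intro!: SUP_least simp: inner_diff_right algebra_simps)
qed (use fenchel_young[of "df y" y "\<lambda>z. ereal (f z)"] in simp)

context
  fixes N :: "'a::euclidean_space \<Rightarrow> real" and f :: "'a \<Rightarrow> real" and df :: "'a \<Rightarrow> 'a" and L :: real
  assumes N: "is_norm N"
    and f_grad: "\<And>z. (f has_derivative (\<lambda>v. df z \<bullet> v)) (at z)"
    and f_smooth: "\<And>u v. dual_norm N (df u - df v) \<le> L * N (u - v)"
begin

lemma descent_lemma: "f (y + d) \<le> f y + df y \<bullet> d + L / 2 * (N d)\<^sup>2"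
proof -
  define \<psi> where "\<psi> t = f (y + t *\<^sub>R d) - t * (df y \<bullet> d) - L / 2 * t\<^sup>2 * (N d)\<^sup>2" for t
  have "\<psi> 1 \<le> \<psi> 0"
  proof (rule DERIV_nonpos_imp_nonincreasing[of 0 1 \<psi>])
    fix t :: real assume t: "0 \<le> t" "t \<le> 1"
    have "(df (y + t *\<^sub>R d) - df y) \<bullet> d \<le> dual_norm N (df (y + t *\<^sub>R d) - df y) * N d"
      by (rule inner_le_dual_norm[OF N])
    also have "\<dots> \<le> L * N (t *\<^sub>R d) * N d"
      using f_smooth[of "y + t *\<^sub>R d" y] is_norm_nonneg[OF N, of d] by (simp add: mult_right_mono)
    also have "\<dots> = L * t * (N d)\<^sup>2"
      using t by (simp add: is_norm_scaleR[OF N] power2_eq_square)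
    finally have "df (y + t *\<^sub>R d) \<bullet> d - df y \<bullet> d - L / 2 * (2 * t) * (N d)\<^sup>2 \<le> 0"
      by (simp add: inner_diff_left)
    moreover have "DERIV \<psi> t :> df (y + t *\<^sub>R d) \<bullet> d - df y \<bullet> d - L / 2 * (2 * t) * (N d)\<^sup>2"
      unfolding \<psi>_def
      by (rule has_real_derivative_along_line[OF f_grad] derivative_eq_intros refl | simp)+
    ultimately show "\<exists>D. DERIV \<psi> t :> D \<and> D \<le> 0"
      by blast
  qed simp
  then show ?thesis
    by (simp add: \<psi>_def)
qed

lemma fconj_ge_quadratic:
  assumes L: "0 < L"
  shows "ereal (a \<bullet> z - f z + (dual_norm N (a - df z))\<^sup>2 / (2 * L)) \<le> fconj (\<lambda>z. ereal (f z)) a"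
proof -
  define D where "D = dual_norm N (a - df z)"
  obtain v0 where v0: "N v0 \<le> 1" "(a - df z) \<bullet> v0 = D"
    using dual_norm_attained[OF N] D_def by blast
  define v where "v = (D / L) *\<^sub>R v0"
  have "0 \<le> D"
    unfolding D_def by (rule dual_norm_nonneg[OF N])
  then have "N v \<le> D / L"
    unfolding v_def using L v0(1) by (simp add: is_norm_scaleR[OF N] divide_right_mono mult_left_le)
  then have "L / 2 * (N v)\<^sup>2 \<le> L / 2 * (D / L)\<^sup>2"
    using L is_norm_nonneg[OF N, of v] by (simp add: power_mono)
  also have "\<dots> = D\<^sup>2 / L - D\<^sup>2 / (2 * L)"
    using L by (simp add: power2_eq_square field_simps)
  also have "D\<^sup>2 / L = (a - df z) \<bullet> v"
    unfolding v_def using v0(2) by (simp add: power2_eq_square)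
  finally have "a \<bullet> z - f z + D\<^sup>2 / (2 * L) \<le> a \<bullet> z - f z + (a - df z) \<bullet> v - L / 2 * (N v)\<^sup>2"
    by simp
  also have "\<dots> \<le> a \<bullet> (z + v) - f (z + v)"
    using descent_lemma[of z v] by (simp add: inner_add_right inner_diff_left)
  finally have "ereal (a \<bullet> z - f z + D\<^sup>2 / (2 * L)) \<le> ereal (a \<bullet> (z + v) - f (z + v))"
    by simp
  also have "\<dots> \<le> fconj (\<lambda>z. ereal (f z)) a"
    using fenchel_young[of a "z + v" "\<lambda>z. ereal (f z)"] by simp
  finally show ?thesis
    unfolding D_def .
qed

lemma fconj_strongly_convex_combination:
  assumes L: "0 < L" and \<eta>: "0 < \<eta>" "\<eta> < 1"
  shows "fconj (\<lambda>z. ereal (f z)) ((1 - \<eta>) *\<^sub>R s + \<eta> *\<^sub>R g)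
    \<le> ereal \<eta> * fconj (\<lambda>z. ereal (f z)) g + ereal (1 - \<eta>) * fconj (\<lambda>z. ereal (f z)) s
      - ereal (\<eta> * (1 - \<eta>) / (2 * L) * (dual_norm N (g - s))\<^sup>2)"
proof (cases "fconj (\<lambda>z. ereal (f z)) s = \<infinity> \<or> fconj (\<lambda>z. ereal (f z)) g = \<infinity>")
  case True
  then show ?thesis
    using \<eta> fconj_ereal_neq_minf[of f s] fconj_ereal_neq_minf[of f g] by auto
next
  case False
  then obtain A B where A: "fconj (\<lambda>z. ereal (f z)) s = ereal A"
    and B: "fconj (\<lambda>z. ereal (f z)) g = ereal B"
    using fconj_ereal_neq_minf by (metis ereal_cases)
  define G where "G = dual_norm N (g - s)"
  have "((1 - \<eta>) *\<^sub>R s + \<eta> *\<^sub>R g) \<bullet> z - f z \<le> \<eta> * B + (1 - \<eta>) * A - \<eta> * (1 - \<eta>) / (2 * L) * G\<^sup>2"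
    for z
  proof -
    define a where "a = dual_norm N (s - df z)"
    define b where "b = dual_norm N (g - df z)"
    have "0 \<le> a" "0 \<le> b" "0 \<le> G"
      unfolding a_def b_def G_def by (rule dual_norm_nonneg[OF N])+
    moreover have "G \<le> b + a"
      using dual_norm_triangle[OF N, of "g - df z" "- (s - df z)"]
      unfolding a_def b_def G_def by (simp add: dual_norm_minus[OF N, of "s - df z", symmetric])
    ultimately have "\<eta> * (1 - \<eta>) * G\<^sup>2 \<le> \<eta> * (1 - \<eta>) * (b + a)\<^sup>2"
      using \<eta> by (simp add: power_mono)
    also have "\<dots> \<le> (1 - \<eta>) * a\<^sup>2 + \<eta> * b\<^sup>2"
      using zero_le_power2[of "(1 - \<eta>) * a - \<eta> * b"] by (simp add: power2_eq_square algebra_simps)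
    finally have quadratic: "\<eta> * (1 - \<eta>) * G\<^sup>2 \<le> (1 - \<eta>) * a\<^sup>2 + \<eta> * b\<^sup>2" .
    have "s \<bullet> z - f z + a\<^sup>2 / (2 * L) \<le> A" "g \<bullet> z - f z + b\<^sup>2 / (2 * L) \<le> B"
      using fconj_ge_quadratic[OF L, of s z] fconj_ge_quadratic[OF L, of g z]
      unfolding a_def b_def A B by simp_all
    then have "(1 - \<eta>) * (s \<bullet> z - f z + a\<^sup>2 / (2 * L)) + \<eta> * (g \<bullet> z - f z + b\<^sup>2 / (2 * L))
        \<le> (1 - \<eta>) * A + \<eta> * B"
      using \<eta> by (intro add_mono mult_left_mono) auto
    moreover have "\<eta> * (1 - \<eta>) / (2 * L) * G\<^sup>2 \<le> ((1 - \<eta>) * a\<^sup>2 + \<eta> * b\<^sup>2) / (2 * L)"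
      using quadratic L by (simp add: divide_right_mono)
    ultimately show ?thesis
      by (simp add: inner_add_left algebra_simps add_divide_distrib diff_divide_distrib)
  qed
  then have "fconj (\<lambda>z. ereal (f z)) ((1 - \<eta>) *\<^sub>R s + \<eta> *\<^sub>R g)
      \<le> ereal (\<eta> * B + (1 - \<eta>) * A - \<eta> * (1 - \<eta>) / (2 * L) * G\<^sup>2)"
    unfolding fconj_def by (auto intro!: SUP_least)
  then show ?thesis
    unfolding A B G_def by simp
qed

lemma descent_averaging_step:
  assumes f_convex: "convex_on UNIV f"
  shows "ereal (f ((1 - \<eta>) *\<^sub>R y + \<eta> *\<^sub>R x))
    \<le> ereal ((1 - \<eta>) * f y) - ereal \<eta> * fconj (\<lambda>z. ereal (f z)) (df y)
      + ereal (\<eta> * (df y \<bullet> x) + L * \<eta>\<^sup>2 / 2 * (N (x - y))\<^sup>2)"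
proof -
  have "(N (\<eta> *\<^sub>R (x - y)))\<^sup>2 = \<eta>\<^sup>2 * (N (x - y))\<^sup>2"
    by (simp add: is_norm_scaleR[OF N] power_mult_distrib)
  then have "f ((1 - \<eta>) *\<^sub>R y + \<eta> *\<^sub>R x) \<le> f y + \<eta> * (df y \<bullet> (x - y)) + L / 2 * \<eta>\<^sup>2 * (N (x - y))\<^sup>2"
    using descent_lemma[of y "\<eta> *\<^sub>R (x - y)"] by (simp add: algebra_simps)
  then show ?thesis
    by (simp add: fconj_gradient[OF f_convex f_grad] inner_diff_right algebra_simps)
qed

end

lemma strongly_convex_on_ereal_iff:
  "strongly_convex_on \<mu> N D (\<lambda>z. ereal (\<Phi> z)) \<longleftrightarrow>
    (\<forall>x\<in>D. \<forall>y\<in>D. \<forall>t. 0 < t \<and> t < 1 \<longrightarrow>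
      \<Phi> (t *\<^sub>R x + (1 - t) *\<^sub>R y) \<le> t * \<Phi> x + (1 - t) * \<Phi> y - \<mu> / 2 * t * (1 - t) * (N (x - y))\<^sup>2)"
  by (simp add: strongly_convex_on_def)

lemma strongly_convex_on_add_inner:
  assumes "strongly_convex_on \<mu> N D (\<lambda>z. ereal (\<Phi> z))"
  shows "strongly_convex_on \<mu> N D (\<lambda>z. ereal (s \<bullet> z + \<Phi> z))"
  using assms by (simp add: strongly_convex_on_ereal_iff inner_add_right algebra_simps)

lemma strongly_convex_argmin_quadratic_growth:
  assumes sc: "strongly_convex_on \<mu> N D (\<lambda>z. ereal (\<Phi> z))" and "0 \<le> \<mu>"
    and x: "x \<in> D" and z: "z \<in> D" and x_min: "\<And>u. u \<in> D \<Longrightarrow> \<Phi> x \<le> \<Phi> u"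
    and D: "convex D"
  shows "\<Phi> x + \<mu> / 2 * (N (z - x))\<^sup>2 \<le> \<Phi> z"
proof -
  define \<Delta> where "\<Delta> = \<Phi> z - \<Phi> x"
  define K where "K = \<mu> / 2 * (N (z - x))\<^sup>2"
  have "0 \<le> K"
    unfolding K_def using \<open>0 \<le> \<mu>\<close> by simp
  have along_segment: "K * (1 - t) \<le> \<Delta>" if t: "0 < t" "t < 1" for t
  proof -
    have "\<Phi> x \<le> \<Phi> (t *\<^sub>R z + (1 - t) *\<^sub>R x)"
      using t by (intro x_min convexD[OF D z x]) auto
    also have "\<dots> \<le> t * \<Phi> z + (1 - t) * \<Phi> x - \<mu> / 2 * t * (1 - t) * (N (z - x))\<^sup>2"
      using sc z x t unfolding strongly_convex_on_ereal_iff by blast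
    finally have "t * (K * (1 - t)) \<le> t * \<Delta>"
      unfolding \<Delta>_def K_def by (simp add: algebra_simps)
    then show ?thesis
      using t by simp
  qed
  have "K \<le> \<Delta>"
  proof (rule ccontr)
    assume "\<not> K \<le> \<Delta>"
    moreover have "0 \<le> \<Delta>"
      using along_segment[of "1 / 2"] \<open>0 \<le> K\<close> by simp
    \<comment> \<open>this \<open>t\<close> lies in \<open>(0, 1)\<close> and gives \<open>K * (1 - t) = (K + \<Delta>) / 2 > \<Delta>\<close>\<close>
    ultimately show False
      using along_segment[of "(K - \<Delta>) / (2 * K)"] by (auto simp: field_simps)
  qed
  then show ?thesis
    unfolding \<Delta>_def K_def by simp
qed

lemma strongly_convex_argmin_perturbed:
  fixes N :: "'a::euclidean_space \<Rightarrow> real"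
  assumes N: "is_norm N"
    and sc: "strongly_convex_on \<mu> N D (\<lambda>z. ereal (\<Phi> z))" and "0 < \<mu>"
    and x: "x \<in> D" and z: "z \<in> D" and x_min: "\<And>u. u \<in> D \<Longrightarrow> s \<bullet> x + \<Phi> x \<le> s \<bullet> u + \<Phi> u"
    and D: "convex D"
  shows "s' \<bullet> x + \<Phi> x - (dual_norm N (s' - s))\<^sup>2 / (2 * \<mu>) \<le> s' \<bullet> z + \<Phi> z"
proof -
  define G where "G = dual_norm N (s' - s)"
  define m where "m = N (z - x)"
  have "s \<bullet> x + \<Phi> x + \<mu> / 2 * m\<^sup>2 \<le> s \<bullet> z + \<Phi> z"
    unfolding m_def using \<open>0 < \<mu>\<close>
    by (intro strongly_convex_argmin_quadratic_growth[OF strongly_convex_on_add_inner[OF sc] _ x z x_min D])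
      simp
  moreover have "(s' - s) \<bullet> (x - z) \<le> G * m"
    unfolding G_def m_def is_norm_commute[OF N, of z] by (rule inner_le_dual_norm[OF N])
  moreover have "- G\<^sup>2 / (2 * \<mu>) \<le> \<mu> / 2 * m\<^sup>2 - G * m"
  proof -
    have "0 \<le> (\<mu> * m - G)\<^sup>2 / (2 * \<mu>)"
      using \<open>0 < \<mu>\<close> by simp
    also have "\<dots> = \<mu> / 2 * m\<^sup>2 - G * m + G\<^sup>2 / (2 * \<mu>)"
      using \<open>0 < \<mu>\<close> by (simp add: field_simps power2_eq_square)
    finally show ?thesis
      by simp
  qed
  ultimately show ?thesis
    unfolding G_def by (simp add: inner_diff_left inner_diff_right)
qed

lemma convex_edom_if_strongly_convex:
  assumes g_ninf: "\<And>z. g z \<noteq> -\<infinity>" and sc: "strongly_convex_on \<mu> N (edom g) g"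
  shows "convex (edom g)"
  unfolding convex_alt
proof (intro ballI allI impI)
  fix a b and u :: real
  assume a: "a \<in> edom g" and b: "b \<in> edom g" and u: "0 \<le> u \<and> u \<le> 1"
  show "(1 - u) *\<^sub>R a + u *\<^sub>R b \<in> edom g"
  proof (cases "u = 0 \<or> u = 1")
    case False
    obtain ra rb where "g a = ereal ra" "g b = ereal rb"
      using a b g_ninf unfolding edom_def by (cases "g a"; cases "g b") auto
    moreover have "g ((1 - u) *\<^sub>R a + (1 - (1 - u)) *\<^sub>R b)
        \<le> ereal (1 - u) * g a + ereal (1 - (1 - u)) * g b
          - ereal (\<mu> / 2 * (1 - u) * (1 - (1 - u)) * (N (a - b))\<^sup>2)"
      using a b u False by (intro sc[unfolded strongly_convex_on_def, rule_format]) auto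
    ultimately have "g ((1 - u) *\<^sub>R a + u *\<^sub>R b)
        \<le> ereal ((1 - u) * ra + u * rb - \<mu> / 2 * (1 - u) * u * (N (a - b))\<^sup>2)"
      by simp
    then show ?thesis
      unfolding edom_def using le_less_trans by fastforce
  qed (use a b in auto)
qed

lemma strongly_convex_on_real_of_ereal:
  assumes g_ninf: "\<And>z. g z \<noteq> -\<infinity>" and sc: "strongly_convex_on \<mu> N (edom g) g"
  shows "strongly_convex_on \<mu> N (edom g) (\<lambda>z. ereal (real_of_ereal (g z)))"
proof -
  have real: "ereal (real_of_ereal (g z)) = g z" if "z \<in> edom g" for z
    using that g_ninf[of z] by (cases "g z") (auto simp: edom_def)
  show ?thesis
    unfolding strongly_convex_on_def
  proof (intro ballI allI impI)
    fix a b and t :: real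
    assume a: "a \<in> edom g" and b: "b \<in> edom g" and t: "0 < t \<and> t < 1"
    have "t *\<^sub>R a + (1 - t) *\<^sub>R b \<in> edom g"
      using convexD_alt[OF convex_edom_if_strongly_convex[OF g_ninf sc] b a, of t] t
      by (simp add: add.commute)
    then show "ereal (real_of_ereal (g (t *\<^sub>R a + (1 - t) *\<^sub>R b)))
        \<le> ereal t * ereal (real_of_ereal (g a)) + ereal (1 - t) * ereal (real_of_ereal (g b))
          - ereal (\<mu> / 2 * t * (1 - t) * (N (a - b))\<^sup>2)"
      using sc a b t unfolding strongly_convex_on_def by (simp add: real)
  qed
qed

lemma argmin_in_edom:
  assumes g: "proper_fun g" and x_min: "\<And>z. ereal (s \<bullet> x) + g x \<le> ereal (s \<bullet> z) + g z"
  shows "x \<in> edom g"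
proof (rule ccontr)
  assume "x \<notin> edom g"
  moreover obtain z where "g z < \<infinity>" "g z \<noteq> -\<infinity>"
    using g unfolding proper_fun_def by blast
  ultimately show False
    using x_min[of z] by (cases "g z") (auto simp: edom_def)
qed

lemma fconj_minus_argmin:
  assumes g_ninf: "\<And>z. g z \<noteq> -\<infinity>" and x: "x \<in> edom g"
    and x_min: "\<And>z. ereal (s \<bullet> x) + g x \<le> ereal (s \<bullet> z) + g z"
  shows "fconj g (- s) = ereal (- (s \<bullet> x)) - g x"
proof -
  obtain c where c: "g x = ereal c"
    using x g_ninf[of x] unfolding edom_def by (cases "g x") auto
  have "ereal (- s \<bullet> z) - g z \<le> ereal (- (s \<bullet> x) - c)" for z
    using x_min[of z] g_ninf[of z] by (cases "g z") (auto simp: c)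
  then have "fconj g (- s) \<le> ereal (- (s \<bullet> x)) - g x"
    unfolding fconj_def c by (auto intro: SUP_least)
  moreover have "ereal (- (s \<bullet> x)) - g x \<le> fconj g (- s)"
    using fenchel_young[of "- s" x g] by simp
  ultimately show ?thesis
    by (rule antisym)
qed

lemma fconj_minus_perturbed_argmin:
  fixes N :: "'a::euclidean_space \<Rightarrow> real"
  assumes N: "is_norm N" and "0 < \<mu>"
    and g_ninf: "\<And>z. g z \<noteq> -\<infinity>" and sc: "strongly_convex_on \<mu> N (edom g) g"
    and x: "x \<in> edom g" and x_min: "\<And>z. ereal (s \<bullet> x) + g x \<le> ereal (s \<bullet> z) + g z"
  shows "fconj g (- s') \<le> ereal (- (s' \<bullet> x)) - g x + ereal ((dual_norm N (s' - s))\<^sup>2 / (2 * \<mu>))"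
proof -
  define \<Phi> where "\<Phi> z = real_of_ereal (g z)" for z
  have real: "g z = ereal (\<Phi> z)" if "z \<in> edom g" for z
    using that g_ninf[of z] unfolding \<Phi>_def by (cases "g z") (auto simp: edom_def)
  have perturbed: "s' \<bullet> x + \<Phi> x - (dual_norm N (s' - s))\<^sup>2 / (2 * \<mu>) \<le> s' \<bullet> z + \<Phi> z" if z: "z \<in> edom g" for z
  proof (rule strongly_convex_argmin_perturbed[OF N _ \<open>0 < \<mu>\<close> x z])
    show "strongly_convex_on \<mu> N (edom g) (\<lambda>z. ereal (\<Phi> z))"
      unfolding \<Phi>_def by (rule strongly_convex_on_real_of_ereal[OF g_ninf sc])
    show "s \<bullet> x + \<Phi> x \<le> s \<bullet> u + \<Phi> u" if "u \<in> edom g" for u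
      using x_min[of u] by (simp add: real[OF x] real[OF that])
  qed (rule convex_edom_if_strongly_convex[OF g_ninf sc])
  have "ereal (- s' \<bullet> z) - g z \<le> ereal (- (s' \<bullet> x) - \<Phi> x + (dual_norm N (s' - s))\<^sup>2 / (2 * \<mu>))" for z
  proof (cases "z \<in> edom g")
    case True
    with perturbed[OF True] show ?thesis
      by (simp add: real)
  qed (simp add: edom_def)
  then have "fconj g (- s') \<le> ereal (- (s' \<bullet> x) - \<Phi> x + (dual_norm N (s' - s))\<^sup>2 / (2 * \<mu>))"
    unfolding fconj_def by (rule SUP_least)
  then show ?thesis
    by (simp add: real[OF x])
qed

lemma fconj_argmin_averaging_step:
  fixes N :: "'a::euclidean_space \<Rightarrow> real"
  assumes N: "is_norm N" and "0 < \<mu>"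
    and g_ninf: "\<And>z. g z \<noteq> -\<infinity>" and sc: "strongly_convex_on \<mu> N (edom g) g"
    and x: "x \<in> edom g" and x_min: "\<And>z. ereal (s \<bullet> x) + g x \<le> ereal (s \<bullet> z) + g z"
  shows "fconj g (- ((1 - \<eta>) *\<^sub>R s + \<eta> *\<^sub>R c))
    \<le> ereal (1 - \<eta>) * fconj g (- s) - ereal \<eta> * g x - ereal (\<eta> * (x \<bullet> c))
      + ereal (\<eta>\<^sup>2 / (2 * \<mu>) * (dual_norm N (c - s))\<^sup>2)"
proof -
  obtain r where r: "g x = ereal r"
    using x g_ninf[of x] unfolding edom_def by (cases "g x") auto
  define s' where "s' = (1 - \<eta>) *\<^sub>R s + \<eta> *\<^sub>R c"
  define D where "D = dual_norm N (c - s)"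
  have "(dual_norm N (s' - s))\<^sup>2 = \<eta>\<^sup>2 * D\<^sup>2"
    using dual_norm_scaleR[OF N, of \<eta> "c - s"]
    by (simp add: s'_def D_def algebra_simps power_mult_distrib)
  then have "fconj g (- s') \<le> ereal (- (s' \<bullet> x) - r + \<eta>\<^sup>2 / (2 * \<mu>) * D\<^sup>2)"
    using fconj_minus_perturbed_argmin[OF N \<open>0 < \<mu>\<close> g_ninf sc x x_min, of s'] by (simp add: r)
  also have "- (s' \<bullet> x) - r + \<eta>\<^sup>2 / (2 * \<mu>) * D\<^sup>2
      = (1 - \<eta>) * (- (s \<bullet> x) - r) - \<eta> * r - \<eta> * (x \<bullet> c) + \<eta>\<^sup>2 / (2 * \<mu>) * D\<^sup>2"
    by (simp add: s'_def inner_add_left inner_commute algebra_simps)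
  finally show ?thesis
    unfolding s'_def D_def by (simp add: fconj_minus_argmin[OF g_ninf x x_min] r)
qed

lemma edom_regularized:
  assumes w_nonneg: "\<And>z. 0 \<le> w z" and w_finite: "\<And>z. z \<in> edom h \<Longrightarrow> w z < \<infinity>"
  shows "edom (\<lambda>z. h z + ereal \<alpha> * w z) = edom h"
proof -
  have "ereal \<alpha> * w z \<noteq> \<infinity>" if "z \<in> edom h" for z
    using w_finite[OF that] w_nonneg[of z] by (cases "w z") auto
  then show ?thesis
    unfolding edom_def by (auto simp: less_top[symmetric])
qed

lemma proper_regularized:
  assumes h: "proper_fun h" and w_nonneg: "\<And>z. 0 \<le> w z"
    and w_finite: "\<And>z. z \<in> edom h \<Longrightarrow> w z < \<infinity>" and "0 \<le> \<alpha>"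
  shows "proper_fun (\<lambda>z. h z + ereal \<alpha> * w z)"
proof -
  have "h z + ereal \<alpha> * w z \<noteq> -\<infinity>" for z
    using h w_nonneg[of z] \<open>0 \<le> \<alpha>\<close> by (simp add: proper_fun_def)
  moreover obtain z where "z \<in> edom h"
    using h by (auto simp: proper_fun_def edom_def)
  moreover have "edom (\<lambda>z. h z + ereal \<alpha> * w z) = edom h"
    by (rule edom_regularized[OF w_nonneg w_finite])
  ultimately show ?thesis
    unfolding proper_fun_def edom_def by blast
qed

lemma strongly_convex_regularized:
  assumes h_convex: "econvex h" and h_ninf: "\<And>z. h z \<noteq> -\<infinity>"
    and w_nonneg: "\<And>z. 0 \<le> w z" and w_finite: "\<And>z. z \<in> edom h \<Longrightarrow> w z < \<infinity>"
    and w_sc: "strongly_convex_on \<mu> N (edom h) w" and "0 \<le> \<alpha>"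
  shows "strongly_convex_on (\<alpha> * \<mu>) N (edom h) (\<lambda>z. h z + ereal \<alpha> * w z)"
  unfolding strongly_convex_on_def
proof (intro ballI allI impI)
  fix a b and t :: real
  assume a: "a \<in> edom h" and b: "b \<in> edom h" and t: "0 < t \<and> t < 1"
  define c where "c = t *\<^sub>R a + (1 - t) *\<^sub>R b"
  define H where "H z = real_of_ereal (h z)" for z
  define W where "W z = real_of_ereal (w z)" for z
  have hH: "h z = ereal (H z)" and wW: "w z = ereal (W z)" if "z \<in> edom h" for z
    using that h_ninf[of z] w_finite[OF that] w_nonneg[of z] unfolding H_def W_def edom_def
    by (cases "h z"; cases "w z"; simp)+
  have "h c \<le> ereal t * h a + ereal (1 - t) * h b"
    using h_convex t unfolding econvex_def c_def by blast
  then have h_le: "h c \<le> ereal (t * H a + (1 - t) * H b)"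
    by (simp add: hH a b)
  then have c: "c \<in> edom h"
    unfolding edom_def using le_less_trans by fastforce
  have "W c \<le> t * W a + (1 - t) * W b - \<mu> / 2 * t * (1 - t) * (N (a - b))\<^sup>2"
    using w_sc[unfolded strongly_convex_on_def, rule_format, OF a b, of t] t
    by (simp add: wW a b c[unfolded c_def] c_def)
  then have "\<alpha> * W c \<le> \<alpha> * (t * W a + (1 - t) * W b - \<mu> / 2 * t * (1 - t) * (N (a - b))\<^sup>2)"
    using \<open>0 \<le> \<alpha>\<close> by (rule mult_left_mono)
  with h_le have "H c + \<alpha> * W c \<le> t * (H a + \<alpha> * W a) + (1 - t) * (H b + \<alpha> * W b)
      - \<alpha> * \<mu> / 2 * t * (1 - t) * (N (a - b))\<^sup>2"
    by (simp add: hH c algebra_simps)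
  then show "h c + ereal \<alpha> * w c \<le> ereal t * (h a + ereal \<alpha> * w a) + ereal (1 - t) * (h b + ereal \<alpha> * w b)
      - ereal (\<alpha> * \<mu> / 2 * t * (1 - t) * (N (a - b))\<^sup>2)"
    by (simp add: hH wW a b c)
qed

theorem lemmaC1:
  fixes N :: "real^'n \<Rightarrow> real"
    and f :: "real^'n \<Rightarrow> real" and df :: "real^'n \<Rightarrow> real^'n"
    and h w :: "real^'n \<Rightarrow> ereal"
    and L \<alpha> \<eta> :: real
    and x y s :: "nat \<Rightarrow> real^'n"
  assumes norm: "is_norm N"
    and f_convex: "convex_on UNIV f"
    and f_grad: "\<And>z. (f has_derivative (\<lambda>v. df z \<bullet> v)) (at z)"
    and L_pos: "L > 0"
    and f_smooth: "\<And>u v. dual_norm N (df u - df v) \<le> L * N (u - v)"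
    and h_closed: "closed_fun h" and h_proper: "proper_fun h" and h_convex: "econvex h"
    and h_bdd: "bounded (edom h)"
    and w_nonneg: "\<And>z. w z \<ge> 0"
    and w_closed: "closed_fun w"
    and w_sc: "strongly_convex_on 1 N (edom h) w"
    and w_max: "\<exists>M::real. \<forall>z\<in>edom h. w z \<le> ereal M"
    and alpha_pos: "\<alpha> > 0"
    and eta_def: "\<eta> = \<alpha> / (L + \<alpha>)"
    and y0: "y 0 \<in> edom h"
    and x_step: "\<And>k z. ereal (s k \<bullet> x (Suc k)) + (h (x (Suc k)) + ereal \<alpha> * w (x (Suc k)))
                        \<le> ereal (s k \<bullet> z) + (h z + ereal \<alpha> * w z)"
    and y_step: "\<And>k. y (Suc k) = (1 - \<eta>) *\<^sub>R y k + \<eta> *\<^sub>R x (Suc k)"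
    and s_step: "\<And>k. s (Suc k) = (1 - \<eta>) *\<^sub>R s k + \<eta> *\<^sub>R df (y k)"
  shows "\<forall>k. let ha = (\<lambda>z. h z + ereal \<alpha> * w z); F = (\<lambda>z. ereal (f z)) in
     ereal (f (y (Suc k))) \<le> ereal ((1 - \<eta>) * f (y k)) - ereal \<eta> * fconj F (df (y k))
        + ereal (\<eta> * (df (y k) \<bullet> x (Suc k)) + L * \<eta>\<^sup>2 / 2 * (N (x (Suc k) - y k))\<^sup>2)
   \<and> fconj ha (- s (Suc k)) \<le> ereal (1 - \<eta>) * fconj ha (- s k) - ereal \<eta> * ha (x (Suc k))
        - ereal (\<eta> * (x (Suc k) \<bullet> df (y k)))
        + ereal (\<eta>\<^sup>2 / (2 * \<alpha>) * (dual_norm N (df (y k) - s k))\<^sup>2)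
   \<and> ha (y (Suc k)) \<le> ereal \<eta> * ha (x (Suc k)) + ereal (1 - \<eta>) * ha (y k)
        - ereal (\<alpha> * \<eta> * (1 - \<eta>) / 2 * (N (x (Suc k) - y k))\<^sup>2)
   \<and> fconj F (s (Suc k)) \<le> ereal \<eta> * fconj F (df (y k)) + ereal (1 - \<eta>) * fconj F (s k)
        - ereal (\<eta> * (1 - \<eta>) / (2 * L) * (dual_norm N (df (y k) - s k))\<^sup>2)"
proof -
  \<comment> \<open>\<open>h_closed\<close>, \<open>w_closed\<close> and \<open>h_bdd\<close> only ensure that the argmin in \<open>x_step\<close> exists;
    here it is given.\<close>
  let ?ha = "\<lambda>z. h z + ereal \<alpha> * w z"
  have \<eta>: "0 < \<eta>" "\<eta> < 1"
    using eta_def L_pos alpha_pos by simp_all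
  have w_finite: "\<And>z. z \<in> edom h \<Longrightarrow> w z < \<infinity>"
    using w_max by fastforce
  have edom_ha: "edom ?ha = edom h"
    by (rule edom_regularized[OF w_nonneg w_finite])
  have ha_proper: "proper_fun ?ha"
    using proper_regularized[OF h_proper w_nonneg w_finite] alpha_pos by simp
  then have ha_ninf: "\<And>z. ?ha z \<noteq> -\<infinity>"
    by (simp add: proper_fun_def)
  have x_in: "x (Suc k) \<in> edom ?ha" for k
    by (rule argmin_in_edom[OF ha_proper x_step])
  have ha_sc: "strongly_convex_on \<alpha> N (edom ?ha) ?ha"
    using strongly_convex_regularized[OF h_convex _ w_nonneg w_finite w_sc] h_proper alpha_pos
    by (simp add: edom_ha proper_fun_def)
  have y_in: "y k \<in> edom ?ha" for k
  proof (induction k)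
    case (Suc k)
    with x_in[of k] \<eta> show ?case
      using convexD_alt[OF convex_edom_if_strongly_convex[OF ha_ninf ha_sc], of "y k" "x (Suc k)" \<eta>]
      by (simp add: y_step)
  qed (simp add: edom_ha y0)
  show ?thesis
    unfolding Let_def
    apply (intro allI conjI)
    subgoal for k
      unfolding y_step by (rule descent_averaging_step[OF norm f_grad f_smooth f_convex])
    subgoal for k
      unfolding s_step by (rule fconj_argmin_averaging_step[OF norm alpha_pos ha_ninf ha_sc x_in x_step])
    subgoal for k
      using ha_sc[unfolded strongly_convex_on_def, rule_format, OF x_in y_in, of \<eta>] \<eta>
      by (simp add: y_step add.commute mult.commute mult.left_commute)
    subgoal for k
      unfolding s_step by (rule fconj_strongly_convex_combination[OF norm f_grad f_smooth L_pos \<eta>])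
    done
qed

end
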